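(* Let $q$ be a prime power, $M\geq 2$ an integer, and let $f$ be a SCIM polynomial over $\mathbb{F}_{q^2}$ of odd degree $d\geq 1$. Let $C_f\in \mathrm{U}(d,\mathbb{F}_{q^2})$ be a matrix with characteristic polynomial $f$. If there exists $\alpha\in \mathrm{U}(d,\mathbb{F}_{q^2})$ with $\alpha^M=C_f$, then $f(x^M)$ has a SCIM factor of degree $d$.
   Context: For $a\in\mathbb{F}_{q^2}$ write $\bar a=a^q$, extended coefficientwise to matrices and polynomials. Let $\Lambda_n$ be the $n\times n$ matrix with $1$'s on the antidiagonal and $0$ elsewhere; the unitary group is $\mathrm{U}(n,\mathbb{F}_{q^2})=\{A\in \mathrm{GL}(n,\mathbb{F}_{q^2}) : A\Lambda_n\bar A^{t}=\Lambda_n\}$. For a monic polynomial $f$ of degree $d$ with $f(0)\neq 0$ define $\widetilde{f}(t)=\overline{f(0)}^{-1}t^d\bar f(t^{-1})$. A SCIM polynomial is a monic polynomial $f\in\mathbb{F}_{q^2}[t]$ with $f(0)\neq0$, irreducible over $\mathbb{F}_{q^2}$, with $\widetilde f=f$. *)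

theory Defs
  imports "Jordan_Normal_Form.Char_Poly" "HOL-Computational_Algebra.Polynomial"
begin

text \<open>Conjugation a \<mapsto> a^q on F_{q^2}, extended coefficientwise.\<close>
definition qconj :: "nat \<Rightarrow> 'a::field \<Rightarrow> 'a" where
  "qconj q a = a ^ q"

definition conj_poly :: "nat \<Rightarrow> 'a::field poly \<Rightarrow> 'a poly" where
  "conj_poly q f = map_poly (qconj q) f"

definition conj_mat :: "nat \<Rightarrow> 'a::field mat \<Rightarrow> 'a mat" where
  "conj_mat q A = map_mat (qconj q) A"

definition antidiag :: "nat \<Rightarrow> 'a::field mat" where
  "antidiag n = mat n n (\<lambda>(i,j). if i + j = n - 1 then 1 else 0)"

definition unitary_group :: "nat \<Rightarrow> nat \<Rightarrow> 'a::field mat set" where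
  "unitary_group q n = {A. A \<in> carrier_mat n n \<and> det A \<noteq> 0 \<and>
      A * antidiag n * transpose_mat (conj_mat q A) = antidiag n}"

text \<open>f~(t) = conj(f(0))^{-1} t^d fbar(t^{-1}).\<close>
definition tilde_poly :: "nat \<Rightarrow> 'a::field poly \<Rightarrow> 'a poly" where
  "tilde_poly q f = Polynomial.smult (inverse (qconj q (poly f 0))) (reflect_poly (conj_poly q f))"

definition SCIM :: "nat \<Rightarrow> 'a::field poly \<Rightarrow> bool" where
  "SCIM q f \<longleftrightarrow> lead_coeff f = 1 \<and> poly f 0 \<noteq> 0 \<and> irreducible f \<and> tilde_poly q f = f"

end

theory Submission
  imports Defs "HOL-Computational_Algebra.Primes"
begin

text \<open>Since \<open>f\<close> is irreducible and \<open>f(C) = 0\<close> (Cayley-Hamilton), the algebra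
  \<open>F[C] \<cong> F[x]/(f)\<close> is a field with \<open>q\<^sup>2\<^sup>d\<close> elements, and it lies in \<open>F[\<alpha>]\<close> because
  \<open>C = \<alpha>\<^sup>M\<close>. By Cayley-Hamilton \<open>F[\<alpha>]\<close> has at most \<open>q\<^sup>2\<^sup>d\<close> elements, so \<open>F[\<alpha>] = F[C]\<close> is a
  field and the characteristic polynomial \<open>g\<close> of \<open>\<alpha>\<close> is its (irreducible) minimal polynomial; it
  divides \<open>f(x\<^sup>M)\<close> because \<open>f(\<alpha>\<^sup>M) = 0\<close>. Unitarity of \<open>\<alpha>\<close> makes \<open>tilde_poly q g\<close> annihilate
  \<open>\<alpha>\<close> too, so \<open>g\<close> divides it, and both being monic of degree \<open>d\<close> they are equal.\<close>

section \<open>Polynomials evaluated at square matrices\<close>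

lemma index_mult_mat_sum:
  assumes "A \<in> carrier_mat n m" "B \<in> carrier_mat m l" "i < n" "j < l"
  shows "(A * B) $$ (i, j) = (\<Sum>k<m. A $$ (i, k) * B $$ (k, j))"
  using assms by (auto simp: scalar_prod_def intro!: sum.cong)

lemma zero_smult_mat [simp]: "(0 :: 'a::semiring_0) \<cdot>\<^sub>m A = 0\<^sub>m (dim_row A) (dim_col A)"
  by (rule eq_matI) auto

lemma one_smult_mat [simp]: "(1 :: 'a::semiring_1) \<cdot>\<^sub>m A = A"
  by (rule eq_matI) auto

lemma pow_mat_commute:
  assumes "A \<in> carrier_mat n n"
  shows "A * A ^\<^sub>m k = A ^\<^sub>m k * A"
proof (induction k)
  case (Suc k)
  have "A * A ^\<^sub>m Suc k = (A * A ^\<^sub>m k) * A"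
    using assms by (simp add: assoc_mult_mat[of _ n n _ n _ n])
  then show ?case by (simp add: Suc)
qed (use assms in simp)

lemma transpose_pow_mat:
  fixes A :: "'a::comm_semiring_1 mat"
  assumes "A \<in> carrier_mat n n"
  shows "transpose_mat (A ^\<^sub>m k) = transpose_mat A ^\<^sub>m k"
proof (induction k)
  case (Suc k)
  have "transpose_mat (A ^\<^sub>m Suc k) = transpose_mat (A * A ^\<^sub>m k)"
    by (simp add: pow_mat_commute[OF assms])
  also have "\<dots> = transpose_mat (A ^\<^sub>m k) * transpose_mat A"
    using assms by (simp add: transpose_mult[of _ n n _ n])
  finally show ?case by (simp add: Suc)
qed (use assms in simp)

definition poly_mat :: "'a::comm_ring_1 poly \<Rightarrow> 'a mat \<Rightarrow> 'a mat" where
  "poly_mat p A = mat (dim_row A) (dim_row A)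
     (\<lambda>(i, j). \<Sum>k\<le>degree p. coeff p k * (A ^\<^sub>m k) $$ (i, j))"

lemma dim_poly_mat [simp]:
  "dim_row (poly_mat p A) = dim_row A" "dim_col (poly_mat p A) = dim_row A"
  by (simp_all add: poly_mat_def)

lemma poly_mat_carrier [simp]: "A \<in> carrier_mat n n \<Longrightarrow> poly_mat p A \<in> carrier_mat n n"
  by (simp add: poly_mat_def)

lemma index_poly_mat:
  assumes "A \<in> carrier_mat n n" "i < n" "j < n" "degree p < N"
  shows "poly_mat p A $$ (i, j) = (\<Sum>k<N. coeff p k * (A ^\<^sub>m k) $$ (i, j))"
proof -
  have "(\<Sum>k\<le>degree p. coeff p k * (A ^\<^sub>m k) $$ (i, j)) = (\<Sum>k<N. coeff p k * (A ^\<^sub>m k) $$ (i, j))"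
    using assms(4) by (intro sum.mono_neutral_left) (auto simp: coeff_eq_0)
  then show ?thesis
    using assms by (simp add: poly_mat_def)
qed

lemma poly_mat_0:
  assumes "A \<in> carrier_mat n n"
  shows "poly_mat 0 A = 0\<^sub>m n n"
  using assms by (intro eq_matI) (auto simp: index_poly_mat[OF assms, of _ _ _ 1])

lemma poly_mat_const:
  assumes "A \<in> carrier_mat n n"
  shows "poly_mat [:c:] A = c \<cdot>\<^sub>m 1\<^sub>m n"
  using assms by (intro eq_matI) (auto simp: index_poly_mat[OF assms, of _ _ _ 1])

lemma poly_mat_1:
  assumes "A \<in> carrier_mat n n"
  shows "poly_mat 1 A = 1\<^sub>m n"
  using poly_mat_const[OF assms, of 1] by (simp add: one_pCons)

lemma poly_mat_add:
  assumes A: "A \<in> carrier_mat n n"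
  shows "poly_mat (p + q) A = poly_mat p A + poly_mat q A"
proof -
  define N where "N = Suc (max (degree p) (degree q))"
  have N: "degree p < N" "degree q < N" "degree (p + q) < N"
    using degree_add_le_max[of p q] by (auto simp: N_def)
  show ?thesis
    using A by (intro eq_matI) (auto simp: index_poly_mat[OF A _ _ N(1)]
        index_poly_mat[OF A _ _ N(2)] index_poly_mat[OF A _ _ N(3)] sum.distrib algebra_simps)
qed

lemma poly_mat_diff:
  assumes A: "A \<in> carrier_mat n n"
  shows "poly_mat (p - q) A = poly_mat p A - poly_mat q A"
proof -
  define N where "N = Suc (max (degree p) (degree q))"
  have N: "degree p < N" "degree q < N" "degree (p - q) < N"
    using degree_diff_le_max[of p q] by (auto simp: N_def)
  show ?thesis
    using A by (intro eq_matI) (auto simp: index_poly_mat[OF A _ _ N(1)]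
        index_poly_mat[OF A _ _ N(2)] index_poly_mat[OF A _ _ N(3)] sum_subtractf algebra_simps)
qed

lemma poly_mat_smult:
  assumes A: "A \<in> carrier_mat n n"
  shows "poly_mat (Polynomial.smult c p) A = c \<cdot>\<^sub>m poly_mat p A"
proof -
  have N: "degree p < Suc (degree p)" "degree (Polynomial.smult c p) < Suc (degree p)"
    using degree_smult_le[of c p] by auto
  show ?thesis
    using A by (intro eq_matI) (auto simp: index_poly_mat[OF A _ _ N(1)]
        index_poly_mat[OF A _ _ N(2)] sum_distrib_left algebra_simps)
qed

lemma poly_mat_monom:
  assumes A: "A \<in> carrier_mat n n"
  shows "poly_mat (monom c k) A = c \<cdot>\<^sub>m A ^\<^sub>m k"
proof -
  have N: "degree (monom c k) < Suc k"
    using degree_monom_le[of c k] by simp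
  show ?thesis
  proof (rule eq_matI)
    fix i j
    assume "i < dim_row (c \<cdot>\<^sub>m A ^\<^sub>m k)" "j < dim_col (c \<cdot>\<^sub>m A ^\<^sub>m k)"
    then have ij: "i < n" "j < n"
      using A by (auto split: if_splits)
    show "poly_mat (monom c k) A $$ (i, j) = (c \<cdot>\<^sub>m A ^\<^sub>m k) $$ (i, j)"
      using A ij by (simp add: index_poly_mat[OF A ij N] if_distrib)
  qed (use A in auto)
qed

lemma poly_mat_pCons:
  assumes A: "A \<in> carrier_mat n n"
  shows "poly_mat (pCons a p) A = a \<cdot>\<^sub>m 1\<^sub>m n + A * poly_mat p A"
proof (rule eq_matI)
  fix i j
  assume "i < dim_row (a \<cdot>\<^sub>m 1\<^sub>m n + A * poly_mat p A)"
    and "j < dim_col (a \<cdot>\<^sub>m 1\<^sub>m n + A * poly_mat p A)"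
  then have ij: "i < n" "j < n"
    using A by auto
  define N where "N = Suc (degree p)"
  have N: "degree p < N" "degree (pCons a p) < Suc N"
    by (auto simp: N_def)
  have power: "(A ^\<^sub>m Suc k) $$ (i, j) = (\<Sum>l<n. A $$ (i, l) * (A ^\<^sub>m k) $$ (l, j))" for k
  proof -
    have "(A ^\<^sub>m Suc k) $$ (i, j) = (A * A ^\<^sub>m k) $$ (i, j)"
      by (simp add: pow_mat_commute[OF A])
    also have "\<dots> = (\<Sum>l<n. A $$ (i, l) * (A ^\<^sub>m k) $$ (l, j))"
      by (rule index_mult_mat_sum[OF A pow_carrier_mat[OF A] ij])
    finally show ?thesis .
  qed
  have "poly_mat (pCons a p) A $$ (i, j) = (\<Sum>k<Suc N. coeff (pCons a p) k * (A ^\<^sub>m k) $$ (i, j))"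
    by (rule index_poly_mat[OF A ij N(2)])
  also have "\<dots> = a * 1\<^sub>m n $$ (i, j) + (\<Sum>k<N. coeff p k * (A ^\<^sub>m Suc k) $$ (i, j))"
    using A ij by (subst sum.lessThan_Suc_shift) (simp del: pow_mat.simps(2))
  also have "(\<Sum>k<N. coeff p k * (A ^\<^sub>m Suc k) $$ (i, j))
      = (\<Sum>l<n. A $$ (i, l) * (\<Sum>k<N. coeff p k * (A ^\<^sub>m k) $$ (l, j)))"
    by (simp add: power sum_distrib_left sum.swap[of _ "{..<N}"] algebra_simps del: pow_mat.simps)
  also have "\<dots> = (A * poly_mat p A) $$ (i, j)"
    using A ij by (simp add: index_mult_mat_sum[OF A poly_mat_carrier[OF A] ij]
        index_poly_mat[OF A _ ij(2) N(1)] del: index_mult_mat)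
  finally show "poly_mat (pCons a p) A $$ (i, j) = (a \<cdot>\<^sub>m 1\<^sub>m n + A * poly_mat p A) $$ (i, j)"
    using A ij by simp
qed (use A in auto)

lemma poly_mat_mult:
  assumes A: "A \<in> carrier_mat n n"
  shows "poly_mat (p * q) A = poly_mat p A * poly_mat q A"
proof (induction p rule: pCons_induct)
  case 0
  then show ?case
    using A by (simp add: poly_mat_0)
next
  case (pCons a p)
  have P: "poly_mat p A \<in> carrier_mat n n" and Q: "poly_mat q A \<in> carrier_mat n n"
    using A by auto
  have "poly_mat (pCons a p * q) A = poly_mat (Polynomial.smult a q + pCons 0 (p * q)) A"
    by simp
  also have "\<dots> = a \<cdot>\<^sub>m poly_mat q A + A * (poly_mat p A * poly_mat q A)"
    using A P Q by (simp add: poly_mat_add poly_mat_smult poly_mat_pCons pCons.IH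
        left_add_zero_mat[OF mult_carrier_mat[OF A mult_carrier_mat[OF P Q]]])
  also have "\<dots> = (a \<cdot>\<^sub>m 1\<^sub>m n) * poly_mat q A + (A * poly_mat p A) * poly_mat q A"
    using A P Q by (simp add: mult_smult_assoc_mat[of "1\<^sub>m n" n n _ n] assoc_mult_mat[OF A P Q]
        left_mult_one_mat)
  also have "\<dots> = (a \<cdot>\<^sub>m 1\<^sub>m n + A * poly_mat p A) * poly_mat q A"
    by (rule add_mult_distrib_mat[symmetric]) (use A P Q in auto)
  finally show ?case
    using A by (simp add: poly_mat_pCons)
qed

lemma poly_mat_pcompose:
  assumes A: "A \<in> carrier_mat n n"
  shows "poly_mat (pcompose p q) A = poly_mat p (poly_mat q A)"
proof (induction p rule: pCons_induct)
  case 0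
  then show ?case
    using A by (simp add: poly_mat_0[OF A] poly_mat_0[of _ n])
next
  case (pCons a p)
  have Q: "poly_mat q A \<in> carrier_mat n n"
    using A by simp
  show ?case
    using A pCons.IH by (simp add: poly_mat_add poly_mat_const poly_mat_mult
        poly_mat_pCons[OF Q])
qed

lemma poly_mat_intertwine:
  assumes A: "A \<in> carrier_mat n n" and B: "B \<in> carrier_mat m m" and S: "S \<in> carrier_mat m n"
    and BS: "B * S = S * A"
  shows "poly_mat p B * S = S * poly_mat p A"
proof (induction p rule: pCons_induct)
  case 0
  then show ?case
    using A B S by (simp add: poly_mat_0)
next
  case (pCons a p)
  have X: "poly_mat p B \<in> carrier_mat m m" and Y: "poly_mat p A \<in> carrier_mat n n"
    using A B by auto
  have "poly_mat (pCons a p) B * S = a \<cdot>\<^sub>m S + B * (poly_mat p B * S)"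
    using B S X by (simp add: poly_mat_pCons[OF B] add_mult_distrib_mat[of _ m m]
        mult_smult_assoc_mat[of _ m m] assoc_mult_mat[of B m m _ m S n])
  also have "\<dots> = a \<cdot>\<^sub>m S + (B * S) * poly_mat p A"
    using B S Y by (simp add: pCons.IH assoc_mult_mat[of B m m S n _ n])
  also have "\<dots> = S * poly_mat (pCons a p) A"
    using A S Y by (simp add: BS poly_mat_pCons[OF A] mult_add_distrib_mat[of S m n _ n]
        mult_smult_distrib[of S m n _ n] assoc_mult_mat[of S m n A n _ n])
  finally show ?case .
qed

lemma (in comm_ring_hom) poly_mat_hom:
  assumes A: "A \<in> carrier_mat n n"
  shows "mat\<^sub>h (poly_mat p A) = poly_mat (map_poly hom p) (mat\<^sub>h A)"
proof -
  have N: "degree p < Suc (degree p)" "degree (map_poly hom p) < Suc (degree p)"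
    using degree_map_poly_le[of hom p] by auto
  have hA: "mat\<^sub>h A \<in> carrier_mat n n"
    using A by simp
  show ?thesis
    using A by (intro eq_matI) (auto simp: index_poly_mat[OF A _ _ N(1)]
        index_poly_mat[OF hA _ _ N(2)] hom_add hom_sum hom_mult mat_hom_pow[OF A, symmetric])
qed

lemma poly_mat_transpose:
  assumes A: "A \<in> carrier_mat n n"
  shows "poly_mat p (transpose_mat A) = transpose_mat (poly_mat p A)"
proof -
  have N: "degree p < Suc (degree p)"
    by simp
  have At: "transpose_mat A \<in> carrier_mat n n"
    using A by simp
  show ?thesis
    using A by (intro eq_matI) (auto simp: index_poly_mat[OF A _ _ N] index_poly_mat[OF At _ _ N]
        transpose_pow_mat[OF A, symmetric])
qed

lemma poly_mat_reflect_poly: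
  assumes a: "\<alpha> \<in> carrier_mat n n" and b: "\<beta> \<in> carrier_mat n n" and ab: "\<alpha> * \<beta> = 1\<^sub>m n"
  shows "poly_mat (reflect_poly p) \<alpha> = \<alpha> ^\<^sub>m degree p * poly_mat p \<beta>"
proof (induction p rule: pCons_induct)
  case 0
  show ?case
    using a b by (simp add: poly_mat_0[OF a] poly_mat_0[OF b])
next
  case (pCons c p)
  show ?case
  proof (cases "p = 0")
    case True
    then show ?thesis
      using a b by (simp add: poly_mat_const[OF a] poly_mat_const[OF b])
  next
    case False
    define d where "d = degree p"
    have X: "poly_mat p \<beta> \<in> carrier_mat n n" and P: "\<alpha> ^\<^sub>m d \<in> carrier_mat n n"
      using a b by auto
    have "\<alpha> ^\<^sub>m Suc d * (\<beta> * poly_mat p \<beta>) = \<alpha> ^\<^sub>m d * (\<alpha> * (\<beta> * poly_mat p \<beta>))"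
      using assoc_mult_mat[OF P a mult_carrier_mat[OF b X]] by simp
    also have "\<alpha> * (\<beta> * poly_mat p \<beta>) = poly_mat p \<beta>"
      using assoc_mult_mat[OF a b X] X by (simp add: ab left_mult_one_mat)
    finally have cancel: "\<alpha> ^\<^sub>m Suc d * (\<beta> * poly_mat p \<beta>) = \<alpha> ^\<^sub>m d * poly_mat p \<beta>" .
    have "poly_mat (reflect_poly (pCons c p)) \<alpha> = \<alpha> ^\<^sub>m d * poly_mat p \<beta> + c \<cdot>\<^sub>m \<alpha> ^\<^sub>m Suc d"
      using False a by (simp add: d_def reflect_poly_pCons' poly_mat_add pCons.IH poly_mat_monom
          del: pow_mat.simps)
    also have "\<dots> = c \<cdot>\<^sub>m \<alpha> ^\<^sub>m Suc d + \<alpha> ^\<^sub>m d * poly_mat p \<beta>"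
      by (rule comm_add_mat[OF mult_carrier_mat[OF P X] smult_carrier_mat[OF pow_carrier_mat[OF a]]])
    also have "\<dots> = \<alpha> ^\<^sub>m Suc d * (c \<cdot>\<^sub>m 1\<^sub>m n) + \<alpha> ^\<^sub>m Suc d * (\<beta> * poly_mat p \<beta>)"
      by (simp only: cancel mult_smult_distrib[OF pow_carrier_mat[OF a] one_carrier_mat]
          right_mult_one_mat[OF pow_carrier_mat[OF a]])
    also have "\<dots> = \<alpha> ^\<^sub>m Suc d * (c \<cdot>\<^sub>m 1\<^sub>m n + \<beta> * poly_mat p \<beta>)"
      by (rule mult_add_distrib_mat[symmetric, OF pow_carrier_mat[OF a]
            smult_carrier_mat[OF one_carrier_mat] mult_carrier_mat[OF b X]])
    also have "\<dots> = \<alpha> ^\<^sub>m degree (pCons c p) * poly_mat (pCons c p) \<beta>"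
      by (simp only: d_def degree_pCons_eq[OF False] poly_mat_pCons[OF b])
    finally show ?thesis .
  qed
qed

section \<open>The Cayley-Hamilton theorem\<close>

lemma char_poly_coeff_identity:
  fixes A :: "'a::comm_ring_1 mat"
  assumes A: "A \<in> carrier_mat n n" and ij: "i < n" "j < n"
  defines "B \<equiv> adj_mat (char_poly_matrix A)"
  shows "coeff (char_poly A) k * 1\<^sub>m n $$ (i, j)
    = coeff (pCons 0 (B $$ (i, j))) k - (\<Sum>l<n. A $$ (i, l) * coeff (B $$ (l, j)) k)"
proof -
  have P: "char_poly_matrix A \<in> carrier_mat n n"
    using A by simp
  have B: "B \<in> carrier_mat n n"
    using adj_mat(1)[OF P] by (simp add: B_def)
  have "char_poly A * 1\<^sub>m n $$ (i, j) = (char_poly_matrix A * B) $$ (i, j)"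
    using adj_mat(2)[OF P] ij by (simp add: B_def char_poly_def)
  also have "\<dots> = (\<Sum>l<n. (if i = l then pCons 0 (B $$ (l, j)) else 0)
      - Polynomial.smult (A $$ (i, l)) (B $$ (l, j)))"
    unfolding index_mult_mat_sum[OF P B ij]
  proof (intro sum.cong refl)
    fix l
    assume "l \<in> {..<n}"
    then have "char_poly_matrix A $$ (i, l) = (if i = l then [:0, 1:] else 0) + [:- A $$ (i, l):]"
      using A ij by (simp add: char_poly_matrix_def)
    moreover have "([:0, 1:] + [:- a:]) * b = pCons 0 b - Polynomial.smult a b" for a :: 'a and b
      by (simp add: algebra_simps)
    ultimately show "char_poly_matrix A $$ (i, l) * B $$ (l, j)
        = (if i = l then pCons 0 (B $$ (l, j)) else 0) - Polynomial.smult (A $$ (i, l)) (B $$ (l, j))"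
      by simp
  qed
  also have "\<dots> = pCons 0 (B $$ (i, j)) - (\<Sum>l<n. Polynomial.smult (A $$ (i, l)) (B $$ (l, j)))"
    using ij by (simp add: sum_subtractf)
  finally show ?thesis
    using ij by (cases "i = j") (simp_all add: coeff_sum)
qed

theorem cayley_hamilton:
  fixes A :: "'a::comm_ring_1 mat"
  assumes A: "A \<in> carrier_mat n n"
  shows "poly_mat (char_poly A) A = 0\<^sub>m n n"
proof -
  define B where "B = adj_mat (char_poly_matrix A)"
  define coeff_mat where "coeff_mat P k = mat n n (\<lambda>(i, j). coeff (P $$ (i, j)) k)"
    for P :: "'a poly mat" and k
  define G where "G k = A ^\<^sub>m k * coeff_mat (map_mat (pCons 0) B) k" for k
  have B_carrier: "B \<in> carrier_mat n n"
    using A by (simp add: B_def adj_mat)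
  have coeff_mat: "coeff_mat P k \<in> carrier_mat n n" for P k
    by (simp add: coeff_mat_def)
  have dim_coeff_mat: "dim_row (coeff_mat P k) = n" "dim_col (coeff_mat P k) = n" for P k
    by (simp_all add: coeff_mat_def)
  have index_coeff_mat: "coeff_mat P k $$ (i, j) = coeff (P $$ (i, j)) k" if "i < n" "j < n" for P k i j
    using that by (simp add: coeff_mat_def)
  have G: "G k \<in> carrier_mat n n" for k
    using mult_carrier_mat[OF pow_carrier_mat[OF A] coeff_mat] by (simp add: G_def)
  have telescope: "coeff (char_poly A) k \<cdot>\<^sub>m A ^\<^sub>m k = G k - G (Suc k)" for k
  proof -
    have key: "coeff (char_poly A) k \<cdot>\<^sub>m 1\<^sub>m n = coeff_mat (map_mat (pCons 0) B) k - A * coeff_mat B k"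
    proof (rule eq_matI)
      fix i j
      assume "i < dim_row (coeff_mat (map_mat (pCons 0) B) k - A * coeff_mat B k)"
        and "j < dim_col (coeff_mat (map_mat (pCons 0) B) k - A * coeff_mat B k)"
      then have ij: "i < n" "j < n"
        using A by (simp_all add: coeff_mat_def)
      have "(coeff (char_poly A) k \<cdot>\<^sub>m 1\<^sub>m n) $$ (i, j) = coeff (char_poly A) k * 1\<^sub>m n $$ (i, j)"
        using ij by simp
      also have "\<dots> = coeff (pCons 0 (B $$ (i, j))) k - (\<Sum>l<n. A $$ (i, l) * coeff (B $$ (l, j)) k)"
        by (rule char_poly_coeff_identity[OF A ij, folded B_def])
      also have "\<dots> = (coeff_mat (map_mat (pCons 0) B) k - A * coeff_mat B k) $$ (i, j)"
        using A B_carrier ij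
        by (simp add: index_coeff_mat dim_coeff_mat scalar_prod_def lessThan_atLeast0)
      finally show "(coeff (char_poly A) k \<cdot>\<^sub>m 1\<^sub>m n) $$ (i, j)
          = (coeff_mat (map_mat (pCons 0) B) k - A * coeff_mat B k) $$ (i, j)" .
    qed (use A in \<open>auto simp: coeff_mat_def\<close>)
    have "coeff (char_poly A) k \<cdot>\<^sub>m A ^\<^sub>m k = A ^\<^sub>m k * (coeff (char_poly A) k \<cdot>\<^sub>m 1\<^sub>m n)"
      using A by (simp add: mult_smult_distrib[OF pow_carrier_mat[OF A] one_carrier_mat]
          right_mult_one_mat)
    also have "\<dots> = A ^\<^sub>m k * coeff_mat (map_mat (pCons 0) B) k - A ^\<^sub>m k * (A * coeff_mat B k)"
      unfolding key
      by (rule mult_minus_distrib_mat[OF pow_carrier_mat[OF A] coeff_mat mult_carrier_mat[OF A coeff_mat]])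
    also have "A ^\<^sub>m k * (A * coeff_mat B k) = A ^\<^sub>m Suc k * coeff_mat B k"
      using A by (simp add: assoc_mult_mat[OF pow_carrier_mat[OF A] A coeff_mat])
    also have "coeff_mat B k = coeff_mat (map_mat (pCons 0) B) (Suc k)"
      using B_carrier by (intro eq_matI) (auto simp: coeff_mat_def)
    finally show ?thesis
      by (simp add: G_def del: pow_mat.simps)
  qed
  define S where "S = Max ((\<lambda>(i, j). degree (B $$ (i, j))) ` ({..<n} \<times> {..<n}))"
  have S: "degree (B $$ (i, j)) \<le> S" if "i < n" "j < n" for i j
    unfolding S_def using that by (intro Max_ge) (auto intro!: image_eqI[where x = "(i, j)"])
  define N where "N = degree (char_poly A) + S + 2"
  have "coeff_mat (map_mat (pCons 0) B) 0 = 0\<^sub>m n n"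
    using B_carrier by (intro eq_matI) (auto simp: index_coeff_mat dim_coeff_mat)
  moreover have "coeff_mat (map_mat (pCons 0) B) N = 0\<^sub>m n n"
  proof (rule eq_matI)
    fix i j
    assume "i < dim_row (0\<^sub>m n n :: 'a mat)" "j < dim_col (0\<^sub>m n n :: 'a mat)"
    then have ij: "i < n" "j < n"
      by auto
    have "degree (B $$ (i, j)) < Suc (degree (char_poly A) + S)"
      using S[OF ij] by simp
    then show "coeff_mat (map_mat (pCons 0) B) N $$ (i, j) = 0\<^sub>m n n $$ (i, j)"
      using B_carrier ij by (simp add: index_coeff_mat N_def coeff_eq_0)
  qed (simp_all add: dim_coeff_mat)
  ultimately have G_0: "G 0 = 0\<^sub>m n n" and G_N: "G N = 0\<^sub>m n n"
    using A by (simp_all add: G_def)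
  show ?thesis
  proof (rule eq_matI)
    fix i j
    assume "i < dim_row (0\<^sub>m n n :: 'a mat)" "j < dim_col (0\<^sub>m n n :: 'a mat)"
    then have ij: "i < n" "j < n"
      by auto
    have N: "degree (char_poly A) < N"
      by (simp add: N_def)
    have "poly_mat (char_poly A) A $$ (i, j) = (\<Sum>k<N. (coeff (char_poly A) k \<cdot>\<^sub>m A ^\<^sub>m k) $$ (i, j))"
      using A ij by (simp add: index_poly_mat[OF A ij N])
    also have "\<dots> = (\<Sum>k<N. G k $$ (i, j) - G (Suc k) $$ (i, j))"
      using ij by (simp only: telescope) (simp add: G[THEN carrier_matD(1)] G[THEN carrier_matD(2)])
    also have "\<dots> = 0"
      unfolding sum_lessThan_telescope'[of "\<lambda>k. G k $$ (i, j)"] using G_0 G_N ij by simp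
    finally show "poly_mat (char_poly A) A $$ (i, j) = 0\<^sub>m n n $$ (i, j)"
      using ij by simp
  qed (use A in auto)
qed

section \<open>Unitary matrices and reciprocal polynomials\<close>

text \<open>Translation by \<open>1\<close> permutes a finite ring, so the sums of \<open>x + 1\<close> and of \<open>x\<close> over all
  \<open>x\<close> agree.\<close>
lemma of_nat_card_eq_0: "of_nat (card (UNIV :: 'a::{finite,ring_1} set)) = (0 :: 'a)"
proof -
  have "(\<Sum>x\<in>UNIV. x + 1) = (\<Sum>x\<in>UNIV. x :: 'a)"
    by (rule sum.reindex_bij_witness[of _ "\<lambda>x. x - 1" "\<lambda>x. x + 1"]) auto
  then show ?thesis
    by (simp add: sum.distrib)
qed

lemma field_hom_qconj:
  assumes q: "\<exists>p k. prime p \<and> k \<ge> 1 \<and> q = p ^ k"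
    and card: "card (UNIV :: 'a::{finite,field} set) = q ^ 2"
  shows "field_hom (qconj q :: 'a \<Rightarrow> 'a)"
proof -
  obtain p k where p: "prime p" and q: "q = p ^ k"
    using q by blast
  have prime_char: "prime CHAR('a)"
    by (rule prime_CHAR_semidom[OF finite_imp_CHAR_pos]) simp
  have "CHAR('a) dvd card (UNIV :: 'a set)"
    using of_nat_card_eq_0[where 'a = 'a] by (simp add: of_nat_eq_0_iff_char_dvd)
  then have "CHAR('a) dvd p ^ (k * 2)"
    by (simp only: card q power_mult)
  then have "CHAR('a) dvd p"
    by (rule prime_dvd_power[OF prime_char])
  then have "CHAR('a) = p"
    using prime_char p by (simp add: primes_dvd_imp_eq)
  then have add: "(x + y) ^ q = x ^ q + y ^ q" for x y :: 'a
    using prime_char q by (intro freshmans_dream') simp_all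
  have "q > 0"
    using p q by (simp add: prime_gt_0_nat)
  then show ?thesis
    by unfold_locales (simp_all add: qconj_def add power_mult_distrib)
qed

lemma antidiag_mult_antidiag: "antidiag n * antidiag n = (1\<^sub>m n :: 'a::field mat)"
proof (rule eq_matI)
  fix i j
  assume "i < dim_row (1\<^sub>m n :: 'a mat)" "j < dim_col (1\<^sub>m n :: 'a mat)"
  then have ij: "i < n" "j < n"
    by auto
  have L: "antidiag n \<in> carrier_mat n n"
    by (simp add: antidiag_def)
  have "(antidiag n * antidiag n :: 'a mat) $$ (i, j) = (\<Sum>k<n. antidiag n $$ (i, k) * antidiag n $$ (k, j))"
    by (rule index_mult_mat_sum[OF L L ij])
  also have "\<dots> = (\<Sum>k<n. if k = n - 1 - i then (if i = j then 1 else 0) else (0 :: 'a))"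
    using ij by (intro sum.cong) (auto simp: antidiag_def)
  finally show "(antidiag n * antidiag n :: 'a mat) $$ (i, j) = 1\<^sub>m n $$ (i, j)"
    using ij by simp
qed (auto simp: antidiag_def)

text \<open>Unitarity gives \<open>\<alpha>\<^sup>-\<^sup>1 = \<Lambda> \<alpha>\<^sup>\<sigma>\<^sup>T \<Lambda>\<close> with \<open>\<sigma> = qconj q\<close>; hence \<open>p\<^sup>\<sigma>(\<alpha>\<^sup>-\<^sup>1) = 0\<close>, and multiplying by
  \<open>\<alpha>\<^sup>d\<close> turns this into the vanishing of the reversed polynomial.\<close>
lemma poly_mat_tilde_poly_eq_0:
  fixes \<alpha> :: "'a::field mat"
  assumes hom: "field_hom (qconj q :: 'a \<Rightarrow> 'a)"
    and \<alpha>: "\<alpha> \<in> unitary_group q n" and p: "poly_mat p \<alpha> = 0\<^sub>m n n"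
  shows "poly_mat (tilde_poly q p) \<alpha> = 0\<^sub>m n n"
proof -
  interpret field_hom "qconj q :: 'a \<Rightarrow> 'a"
    by (rule hom)
  define L where "L = (antidiag n :: 'a mat)"
  define T where "T = transpose_mat (conj_mat q \<alpha>)"
  define \<beta> where "\<beta> = L * T * L"
  define p' where "p' = conj_poly q p"
  have a: "\<alpha> \<in> carrier_mat n n" and unitary: "\<alpha> * L * T = L"
    using \<alpha> by (auto simp: unitary_group_def L_def T_def)
  have L: "L \<in> carrier_mat n n"
    by (simp add: L_def antidiag_def)
  have LL: "L * L = 1\<^sub>m n"
    by (simp add: L_def antidiag_mult_antidiag)
  have T: "T \<in> carrier_mat n n"
    using a by (simp add: T_def conj_mat_def)
  have b: "\<beta> \<in> carrier_mat n n"
    using L T by (simp add: \<beta>_def)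
  have LT: "L * T \<in> carrier_mat n n"
    using L T by simp
  have "\<alpha> * \<beta> = (\<alpha> * (L * T)) * L"
    unfolding \<beta>_def by (rule assoc_mult_mat[OF a LT L, symmetric])
  also have "\<alpha> * (L * T) = \<alpha> * L * T"
    by (rule assoc_mult_mat[OF a L T, symmetric])
  finally have ab: "\<alpha> * \<beta> = 1\<^sub>m n"
    by (simp add: unitary LL)
  have "\<beta> * L = L * T * (L * L)"
    unfolding \<beta>_def by (rule assoc_mult_mat[OF LT L L])
  then have bL: "\<beta> * L = L * T"
    using LT by (simp add: LL right_mult_one_mat)
  have "poly_mat p' T = transpose_mat (poly_mat p' (map_mat (qconj q) \<alpha>))"
    unfolding T_def conj_mat_def by (rule poly_mat_transpose) (use a in simp)
  also have "poly_mat p' (map_mat (qconj q) \<alpha>) = map_mat (qconj q) (poly_mat p \<alpha>)"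
    unfolding p'_def conj_poly_def by (rule poly_mat_hom[OF a, symmetric])
  also have "\<dots> = 0\<^sub>m n n"
    by (rule eq_matI) (auto simp: p)
  finally have p'_L: "poly_mat p' \<beta> * L = 0\<^sub>m n n"
    using L by (simp add: poly_mat_intertwine[OF T b L bL])
  have "poly_mat p' \<beta> = poly_mat p' \<beta> * (L * L)"
    using b by (simp add: LL right_mult_one_mat)
  also have "\<dots> = (poly_mat p' \<beta> * L) * L"
    by (rule assoc_mult_mat[OF poly_mat_carrier[OF b] L L, symmetric])
  also have "\<dots> = 0\<^sub>m n n"
    using L by (simp add: p'_L)
  finally have "poly_mat (reflect_poly p') \<alpha> = 0\<^sub>m n n"
    using a by (simp add: poly_mat_reflect_poly[OF a b ab])
  then show ?thesis
    using a by (simp add: tilde_poly_def p'_def poly_mat_smult)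
qed

lemma tilde_poly_monic:
  fixes p :: "'a::field poly"
  assumes hom: "field_hom (qconj q :: 'a \<Rightarrow> 'a)" and p0: "poly p 0 \<noteq> 0"
  shows "degree (tilde_poly q p) = degree p" and "lead_coeff (tilde_poly q p) = 1"
proof -
  interpret field_hom "qconj q :: 'a \<Rightarrow> 'a"
    by (rule hom)
  have c0: "coeff (conj_poly q p) 0 = qconj q (poly p 0)" "qconj q (poly p 0) \<noteq> 0"
    using p0 by (simp_all add: conj_poly_def poly_0_coeff_0)
  have degree_conj: "degree (conj_poly q p) = degree p"
    by (simp add: conj_poly_def)
  show degree_tilde: "degree (tilde_poly q p) = degree p"
    using c0 p0 by (simp add: tilde_poly_def degree_conj)
  show "lead_coeff (tilde_poly q p) = 1"
    using c0 by (simp add: degree_tilde) (simp add: tilde_poly_def coeff_reflect_poly degree_conj)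
qed

lemma monic_dvd_same_degree_eq:
  fixes g h :: "'a::field poly"
  assumes "g dvd h" "lead_coeff g = 1" "lead_coeff h = 1" "degree h = degree g"
  shows "h = g"
proof -
  obtain k where h: "h = g * k"
    using assms(1) by blast
  then have "lead_coeff k = 1"
    using assms(2,3) by (simp add: lead_coeff_mult)
  moreover have "g \<noteq> 0" "k \<noteq> 0"
    using assms(2) \<open>lead_coeff k = 1\<close> by auto
  then have "degree k = 0"
    using h assms(4) by (simp add: degree_mult_eq)
  ultimately have "k = 1"
    by (metis degree_0_id one_pCons)
  then show ?thesis
    by (simp add: h)
qed

lemma poly_char_poly_0_neq_0:
  fixes A :: "'a::field mat"
  assumes A: "A \<in> carrier_mat n n" and det: "det A \<noteq> 0"
  shows "poly (char_poly A) 0 \<noteq> 0"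
proof -
  have "char_matrix A 0 = A"
    using A by (auto simp: char_matrix_def)
  then show ?thesis
    using char_poly_matrix[OF A, of 0] det_0_negate[OF A] det by simp
qed

section \<open>Finite fields of matrices\<close>

definition polys_deg_less :: "nat \<Rightarrow> 'a::zero poly set" where
  "polys_deg_less n = {p. \<forall>i\<ge>n. coeff p i = 0}"

lemma polys_deg_lessI: "degree p < n \<Longrightarrow> p \<in> polys_deg_less n"
  by (auto simp: polys_deg_less_def coeff_eq_0)

lemma zero_in_polys_deg_less: "0 \<in> polys_deg_less n"
  by (simp add: polys_deg_less_def)

lemma diff_in_polys_deg_less:
  "p \<in> polys_deg_less n \<Longrightarrow> q \<in> polys_deg_less n \<Longrightarrow> p - q \<in> polys_deg_less n"
  by (simp add: polys_deg_less_def)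

lemma mod_in_polys_deg_less:
  fixes p f :: "'a::field poly"
  assumes "f \<noteq> 0"
  shows "p mod f \<in> polys_deg_less (degree f)"
proof (cases "p mod f = 0")
  case False
  then show ?thesis
    using degree_mod_less'[OF assms] by (intro polys_deg_lessI)
qed (simp add: zero_in_polys_deg_less)

lemma dvd_in_polys_deg_less_imp_0:
  fixes f p :: "'a::idom poly"
  assumes "f dvd p" "p \<in> polys_deg_less (degree f)"
  shows "p = 0"
proof (rule ccontr)
  assume p: "p \<noteq> 0"
  then have "degree f \<le> degree p"
    by (rule dvd_imp_degree_le[OF assms(1)])
  then have "coeff p (degree p) = 0"
    using assms(2) by (simp add: polys_deg_less_def)
  then show False
    using p by simp
qed

lemma polys_deg_less_eq_image_Poly:
  "polys_deg_less n = Poly ` {xs :: 'a::zero list. length xs = n}"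
proof (rule equalityI)
  show "Poly ` {xs. length xs = n} \<subseteq> polys_deg_less n"
    by (auto simp: polys_deg_less_def nth_default_def)
next
  show "polys_deg_less n \<subseteq> Poly ` {xs :: 'a list. length xs = n}"
  proof
    fix p :: "'a poly"
    assume p: "p \<in> polys_deg_less n"
    have "p = Poly (map (coeff p) [0..<n])"
      using p by (intro poly_eqI) (auto simp: polys_deg_less_def nth_default_def)
    moreover have "map (coeff p) [0..<n] \<in> {xs. length xs = n}"
      by simp
    ultimately show "p \<in> Poly ` {xs. length xs = n}"
      by (rule image_eqI)
  qed
qed

lemma card_polys_deg_less: "card (polys_deg_less n :: 'a::{finite,zero} poly set) = card (UNIV :: 'a set) ^ n"
proof -
  have "inj_on (Poly :: 'a list \<Rightarrow> 'a poly) {xs. length xs = n}"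
  proof (rule inj_onI)
    fix xs ys :: "'a list"
    assume "xs \<in> {xs. length xs = n}" "ys \<in> {xs. length xs = n}" and eq: "Poly xs = Poly ys"
    then have length: "length xs = length ys"
      by simp
    show "xs = ys"
    proof (rule nth_equalityI[OF length])
      fix i
      assume "i < length xs"
      then show "xs ! i = ys ! i"
        using arg_cong[OF eq, of "\<lambda>p. coeff p i"] length by (simp add: nth_default_nth)
    qed
  qed
  then show ?thesis
    using card_lists_length_eq[of "UNIV :: 'a set" n]
    by (simp add: polys_deg_less_eq_image_Poly card_image)
qed

lemma finite_polys_deg_less: "finite (polys_deg_less n :: 'a::{finite,zero} poly set)"
  by (rule card_ge_0_finite) (simp add: card_polys_deg_less finite_UNIV_card_ge_0)

lemma degree_pos_if_irreducible:
  fixes f :: "'a::field poly"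
  assumes "irreducible f"
  shows "0 < degree f"
  using assms is_unit_iff_degree[of f] by (auto dest: irreducible_not_unit)

text \<open>Multiplication by \<open>r\<close> is injective on the residues modulo the prime \<open>f\<close>, hence, by
  finiteness, surjective; this replaces a Bezout identity.\<close>
lemma irreducible_imp_inverse_mod:
  fixes f r :: "'a::{finite,field} poly"
  assumes irr: "irreducible f" and ndvd: "\<not> f dvd r"
  shows "\<exists>s. f dvd r * s - 1"
proof -
  define P where "P = (polys_deg_less (degree f) :: 'a poly set)"
  have f0: "f \<noteq> 0"
    using irr by auto
  have "inj_on (\<lambda>s. r * s mod f) P"
  proof (rule inj_onI)
    fix s s'
    assume P: "s \<in> P" "s' \<in> P" and eq: "r * s mod f = r * s' mod f"
    have "f dvd r * (s - s')"
      using eq by (simp only: mod_eq_dvd_iff right_diff_distrib)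
    then have "f dvd s - s'"
      using ndvd field_poly_irreducible_imp_prime[OF irr] by (simp add: prime_elem_dvd_mult_iff)
    then have "s - s' = 0"
      using diff_in_polys_deg_less[OF P[unfolded P_def]] by (rule dvd_in_polys_deg_less_imp_0)
    then show "s = s'"
      by simp
  qed
  moreover have "(\<lambda>s. r * s mod f) ` P \<subseteq> P"
    using mod_in_polys_deg_less[OF f0] by (auto simp: P_def)
  moreover have "finite P"
    by (simp add: P_def finite_polys_deg_less)
  ultimately have "(\<lambda>s. r * s mod f) ` P = P"
    by (intro endo_inj_surj)
  moreover have "1 \<in> P"
    using degree_pos_if_irreducible[OF irr] by (simp add: P_def polys_deg_lessI)
  ultimately have "1 \<in> (\<lambda>s. r * s mod f) ` P"
    by simp
  then obtain s where s: "1 = r * s mod f"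
    by blast
  have "r * s - 1 = r * s - r * s mod f"
    by (simp only: s)
  also have "\<dots> = f * (r * s div f)"
    by (rule minus_mod_eq_mult_div)
  finally show ?thesis
    by (blast intro: dvdI)
qed

lemma poly_mat_mod:
  fixes A :: "'a::field mat"
  assumes A: "A \<in> carrier_mat n n" and p: "poly_mat p A = 0\<^sub>m n n"
  shows "poly_mat (s mod p) A = poly_mat s A"
proof -
  have "poly_mat s A = poly_mat (s div p * p) A + poly_mat (s mod p) A"
    using poly_mat_add[OF A, of "s div p * p" "s mod p"] by simp
  also have "poly_mat (s div p * p) A = 0\<^sub>m n n"
    using A p by (simp add: poly_mat_mult[OF A])
  finally show ?thesis
    using A by simp
qed

lemma range_poly_mat_eq_image:
  fixes A :: "'a::field mat"
  assumes A: "A \<in> carrier_mat n n" and p: "p \<noteq> 0" "poly_mat p A = 0\<^sub>m n n"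
  shows "range (\<lambda>s. poly_mat s A) = (\<lambda>s. poly_mat s A) ` polys_deg_less (degree p)"
  using poly_mat_mod[OF A p(2)] mod_in_polys_deg_less[OF p(1)] by (auto intro: image_eqI[OF sym])

lemma
  fixes A :: "'a::{finite,field} mat"
  assumes A: "A \<in> carrier_mat n n" and p: "p \<noteq> 0" "poly_mat p A = 0\<^sub>m n n"
  shows finite_range_poly_mat: "finite (range (\<lambda>s. poly_mat s A))"
    and card_range_poly_mat_le: "card (range (\<lambda>s. poly_mat s A)) \<le> card (UNIV :: 'a set) ^ degree p"
  using card_image_le[OF finite_polys_deg_less, of "\<lambda>s. poly_mat s A" "degree p"]
  by (simp_all add: range_poly_mat_eq_image[OF assms] finite_polys_deg_less card_polys_deg_less)

lemma one_less_card_field: "1 < card (UNIV :: 'a::{finite,field} set)"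
proof -
  have "card {0, 1 :: 'a} \<le> card (UNIV :: 'a set)"
    by (intro card_mono) auto
  then show ?thesis
    by simp
qed

locale irreducible_annihilated_mat =
  fixes C :: "'a::{finite,field} mat" and f :: "'a poly" and n :: nat
  assumes C_carrier: "C \<in> carrier_mat n n"
    and poly_mat_f: "poly_mat f C = 0\<^sub>m n n"
    and irreducible_f: "irreducible f"
    and degree_f: "degree f = n"
begin

lemma dim_pos: "0 < n"
  using degree_pos_if_irreducible[OF irreducible_f] by (simp add: degree_f)

lemma poly_mat_eq_0_if_dvd: "f dvd p \<Longrightarrow> poly_mat p C = 0\<^sub>m n n"
  using C_carrier by (auto simp: poly_mat_mult[OF C_carrier] poly_mat_f)

lemma poly_mat_eq_0_iff: "poly_mat p C = 0\<^sub>m n n \<longleftrightarrow> f dvd p"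
proof
  assume p: "poly_mat p C = 0\<^sub>m n n"
  show "f dvd p"
  proof (rule ccontr)
    assume "\<not> f dvd p"
    then obtain s where "f dvd p * s - 1"
      using irreducible_imp_inverse_mod[OF irreducible_f] by blast
    then have "poly_mat (p * s - 1) C $$ (0, 0) = 0"
      using dim_pos by (simp add: poly_mat_eq_0_if_dvd)
    moreover have "poly_mat (p * s - 1) C $$ (0, 0) = - 1"
      using C_carrier dim_pos p by (simp add: poly_mat_diff poly_mat_mult poly_mat_1)
    ultimately show False
      by simp
  qed
qed (rule poly_mat_eq_0_if_dvd)

lemma poly_mat_mult_eq_0:
  assumes "poly_mat p C * poly_mat s C = 0\<^sub>m n n"
  shows "poly_mat p C = 0\<^sub>m n n \<or> poly_mat s C = 0\<^sub>m n n"
  using assms field_poly_irreducible_imp_prime[OF irreducible_f]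
  by (simp add: poly_mat_mult[OF C_carrier, symmetric] poly_mat_eq_0_iff prime_elem_dvd_mult_iff)

lemma card_range: "card (range (\<lambda>p. poly_mat p C)) = card (UNIV :: 'a set) ^ n"
proof -
  have f0: "f \<noteq> 0"
    using irreducible_f by auto
  have "inj_on (\<lambda>p. poly_mat p C) (polys_deg_less n)"
  proof (rule inj_onI)
    fix p p'
    assume P: "p \<in> polys_deg_less n" "p' \<in> polys_deg_less n" and eq: "poly_mat p C = poly_mat p' C"
    have "f dvd p - p'"
      using C_carrier eq by (simp add: poly_mat_eq_0_iff[symmetric] poly_mat_diff)
    then have "p - p' = 0"
      using diff_in_polys_deg_less[OF P, folded degree_f] by (rule dvd_in_polys_deg_less_imp_0)
    then show "p = p'"
      by simp
  qed
  then show ?thesis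
    using range_poly_mat_eq_image[OF C_carrier f0 poly_mat_f]
    by (simp add: card_image card_polys_deg_less degree_f)
qed

end

locale irreducible_annihilated_mat_root = irreducible_annihilated_mat +
  fixes \<alpha> :: "'a::{finite,field} mat" and r :: "'a poly"
  assumes root_carrier: "\<alpha> \<in> carrier_mat n n"
    and poly_mat_r: "poly_mat r \<alpha> = C"
begin

lemma char_poly_root: "degree (char_poly \<alpha>) = n" "lead_coeff (char_poly \<alpha>) = 1"
  using degree_monic_char_poly[OF root_carrier] by auto

lemma range_subset: "range (\<lambda>p. poly_mat p C) \<subseteq> range (\<lambda>s. poly_mat s \<alpha>)"
proof
  fix X
  assume "X \<in> range (\<lambda>p. poly_mat p C)"
  then obtain p where "X = poly_mat p C"
    by blast
  then have "X = poly_mat (p \<circ>\<^sub>p r) \<alpha>"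
    by (simp add: poly_mat_pcompose[OF root_carrier] poly_mat_r)
  then show "X \<in> range (\<lambda>s. poly_mat s \<alpha>)"
    by blast
qed

lemma
  shows finite_range_root: "finite (range (\<lambda>s. poly_mat s \<alpha>))"
    and card_range_root_le: "card (range (\<lambda>s. poly_mat s \<alpha>)) \<le> card (UNIV :: 'a set) ^ n"
proof -
  have g: "char_poly \<alpha> \<noteq> 0" "poly_mat (char_poly \<alpha>) \<alpha> = 0\<^sub>m n n"
    using char_poly_root cayley_hamilton[OF root_carrier] by auto
  show "finite (range (\<lambda>s. poly_mat s \<alpha>))"
    by (rule finite_range_poly_mat[OF root_carrier g])
  show "card (range (\<lambda>s. poly_mat s \<alpha>)) \<le> card (UNIV :: 'a set) ^ n"
    using card_range_poly_mat_le[OF root_carrier g] by (simp add: char_poly_root)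
qed

lemma degree_annihilator_ge:
  assumes "p \<noteq> 0" "poly_mat p \<alpha> = 0\<^sub>m n n"
  shows "n \<le> degree p"
proof -
  have "card (UNIV :: 'a set) ^ n = card (range (\<lambda>p. poly_mat p C))"
    by (simp add: card_range)
  also have "\<dots> \<le> card (range (\<lambda>s. poly_mat s \<alpha>))"
    by (intro card_mono finite_range_root range_subset)
  also have "\<dots> \<le> card (UNIV :: 'a set) ^ degree p"
    by (rule card_range_poly_mat_le[OF root_carrier assms])
  finally show ?thesis
    by (rule power_le_imp_le_exp[OF one_less_card_field])
qed

lemma range_root_eq: "range (\<lambda>s. poly_mat s \<alpha>) = range (\<lambda>p. poly_mat p C)"
  using card_seteq[OF finite_range_root range_subset] card_range_root_le by (simp add: card_range)

lemma char_poly_dvd_annihilator: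
  assumes p: "poly_mat p \<alpha> = 0\<^sub>m n n"
  shows "char_poly \<alpha> dvd p"
proof -
  have g0: "char_poly \<alpha> \<noteq> 0"
    using char_poly_root by auto
  have "p mod char_poly \<alpha> = 0"
  proof (rule ccontr)
    assume nz: "p mod char_poly \<alpha> \<noteq> 0"
    have "poly_mat (p mod char_poly \<alpha>) \<alpha> = 0\<^sub>m n n"
      using poly_mat_mod[OF root_carrier cayley_hamilton[OF root_carrier]] p by simp
    then have "n \<le> degree (p mod char_poly \<alpha>)"
      by (rule degree_annihilator_ge[OF nz])
    then show False
      using degree_mod_less'[OF g0 nz] char_poly_root by simp
  qed
  then show ?thesis
    by (simp add: mod_0_imp_dvd)
qed

lemma irreducible_char_poly: "irreducible (char_poly \<alpha>)"
proof -
  have factors: "is_unit b \<or> is_unit c" if bc: "char_poly \<alpha> = b * c" for b c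
  proof (rule ccontr)
    assume "\<not> (is_unit b \<or> is_unit c)"
    moreover have "b \<noteq> 0" "c \<noteq> 0"
      using bc char_poly_root by auto
    ultimately have "degree b < n" "degree c < n"
      using bc char_poly_root degree_mult_eq[of b c] by (auto simp: is_unit_iff_degree)
    obtain b' c' where "poly_mat b \<alpha> = poly_mat b' C" "poly_mat c \<alpha> = poly_mat c' C"
      using range_root_eq by (blast intro: rangeI)
    moreover have "poly_mat b \<alpha> * poly_mat c \<alpha> = 0\<^sub>m n n"
      using cayley_hamilton[OF root_carrier] by (simp add: bc poly_mat_mult[OF root_carrier])
    ultimately have "poly_mat b \<alpha> = 0\<^sub>m n n \<or> poly_mat c \<alpha> = 0\<^sub>m n n"
      using poly_mat_mult_eq_0 by simp
    then show False
      using degree_annihilator_ge[OF \<open>b \<noteq> 0\<close>] degree_annihilator_ge[OF \<open>c \<noteq> 0\<close>]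
        \<open>degree b < n\<close> \<open>degree c < n\<close> by auto
  qed
  moreover have "char_poly \<alpha> \<noteq> 0" "\<not> is_unit (char_poly \<alpha>)"
    using char_poly_root dim_pos by (auto simp: is_unit_iff_degree)
  ultimately show ?thesis
    unfolding irreducible_def by blast
qed

lemma SCIM_char_poly:
  assumes hom: "field_hom (qconj q :: 'a \<Rightarrow> 'a)" and unitary: "\<alpha> \<in> unitary_group q n"
  shows "SCIM q (char_poly \<alpha>)"
proof -
  have g0: "poly (char_poly \<alpha>) 0 \<noteq> 0"
    using unitary by (intro poly_char_poly_0_neq_0[OF root_carrier]) (simp add: unitary_group_def)
  have "char_poly \<alpha> dvd tilde_poly q (char_poly \<alpha>)"
    by (rule char_poly_dvd_annihilator[OF poly_mat_tilde_poly_eq_0[OF hom unitary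
          cayley_hamilton[OF root_carrier]]])
  then have "tilde_poly q (char_poly \<alpha>) = char_poly \<alpha>"
  proof (rule monic_dvd_same_degree_eq)
    show "lead_coeff (char_poly \<alpha>) = 1"
      by (rule char_poly_root(2))
    show "lead_coeff (tilde_poly q (char_poly \<alpha>)) = 1"
      by (rule tilde_poly_monic(2)[OF hom g0])
    show "degree (tilde_poly q (char_poly \<alpha>)) = degree (char_poly \<alpha>)"
      by (rule tilde_poly_monic(1)[OF hom g0])
  qed
  then show ?thesis
    using irreducible_char_poly char_poly_root g0 by (simp add: SCIM_def)
qed

end

theorem lemma4p1:
  fixes q M :: nat and f :: "'a::{finite,field} poly" and C :: "'a mat"
  assumes "\<exists>p k. prime p \<and> k \<ge> 1 \<and> q = p ^ k"
    and "card (UNIV :: 'a set) = q ^ 2"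
    and "M \<ge> 2"
    and "SCIM q f"
    and "odd (degree f)" and "degree f \<ge> 1"
    and "C \<in> unitary_group q (degree f)"
    and "char_poly C = f"
    and "\<exists>\<alpha> \<in> unitary_group q (degree f). \<alpha> ^\<^sub>m M = C"
  shows "\<exists>g. SCIM q g \<and> degree g = degree f \<and> g dvd pcompose f (monom 1 M)"
proof -
  define d where "d = degree f"
  have hom: "field_hom (qconj q :: 'a \<Rightarrow> 'a)"
    using assms(1,2) by (rule field_hom_qconj)
  have C: "C \<in> carrier_mat d d"
    using assms(7) by (simp add: unitary_group_def d_def)
  obtain \<alpha> where \<alpha>: "\<alpha> \<in> unitary_group q d" and \<alpha>_M: "\<alpha> ^\<^sub>m M = C"
    using assms(9) by (auto simp: d_def)
  have \<alpha>_carrier: "\<alpha> \<in> carrier_mat d d"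
    using \<alpha> by (simp add: unitary_group_def)
  interpret irreducible_annihilated_mat_root C f d \<alpha> "monom 1 M"
    using C \<alpha>_carrier \<alpha>_M cayley_hamilton[OF C] assms(4,8)
    by unfold_locales (auto simp: d_def SCIM_def poly_mat_monom)
  have "SCIM q (char_poly \<alpha>)"
    by (rule SCIM_char_poly[OF hom \<alpha>])
  moreover have "char_poly \<alpha> dvd pcompose f (monom 1 M)"
    by (rule char_poly_dvd_annihilator) (simp add: poly_mat_pcompose[OF \<alpha>_carrier] poly_mat_r poly_mat_f)
  ultimately show ?thesis
    using char_poly_root(1) by (auto simp: d_def)
qed

end
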